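(* Let $U^{(1)},U^{(2)}$ be unitary operators on $\mathbb{C}^2\otimes\mathbb{C}^2$ (first factor the "environment", second the "system"), and define quantum channels on $\mathcal{M}_2(\mathbb{C})$ by $T_j(\rho)=\mathrm{tr}_E\big[U^{(j)}(|0\rangle\langle0|\otimes\rho)U^{(j)\dagger}\big]$ for $j=1,2$, where $\mathrm{tr}_E$ is the partial trace over the first factor, and let $T=\frac12T_1+\frac12T_2$. Let $U_k\in\mathrm{SU}(2)$ and let $|\psi\rangle,|\phi_1\rangle,|\phi_2\rangle\in\mathbb{C}^2$ be unit vectors. Consider five qubits ordered as (ancilla $a$, environment $E$, system $S$, $f_1$, $f_2$) prepared in $|+\rangle|0\rangle|\psi\rangle|\phi_1\rangle|\phi_2\rangle$ with $|+\rangle=\frac{1}{\sqrt2}(|0\rangle+|1\rangle)$, and apply in order: (i) $U_k$ on $S$; (ii) controlled on $a$ being $|1\rangle$, swap qubit $E$ with $f_1$ and qubit $S$ with $f_2$; (iii) $U^{(1)}$ on the pair $(E,S)$ and $U^{(2)}$ on the pair $(f_1,f_2)$ (first listed qubit as first tensor factor); (iv) again, controlled on $a$ being $|1\rangle$, swap $E$ with $f_1$ and $S$ with $f_2$; (v) $U_k^{\dagger}$ on $S$. Then the reduced density matrix of qubit $S$ of the final state (partial trace over $a,E,f_1,f_2$) equals $$U_k^{\dagger}\,T\big(U_k\rho U_k^{\dagger}\big)\,U_k=\tfrac12U_k^{\dagger}T_1(U_k\rho U_k^{\dagger})U_k+\tfrac12U_k^{\dagger}T_2(U_k\rho U_k^{\dagger})U_k,\qquad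 \rho=|\psi\rangle\langle\psi| .$$
   Context: In the paper, $T_1,T_2$ are specific quasi-extreme single-qubit channels with Stinespring unitaries $U^{(1)},U^{(2)}$ and $T$ is the channel $T_t^{(\theta_k)}$, so that the output is the constituent channel $T_t^{(k)}(\rho)=U_k^{\dagger}T_t^{(\theta_k)}(U_k\rho U_k^\dagger)U_k$; the statement above holds for arbitrary two-qubit unitaries as given. $\{|0\rangle,|1\rangle\}$ is the computational basis. *)

theory Defs
  imports Complex_Main "Jordan_Normal_Form.Schur_Decomposition" "Jordan_Normal_Form.Determinant"
begin

text \<open>Basis index convention for tensor products: index (i,k) of C^m (x) C^n is i*n+k,
  so the first listed factor is the most significant one.\<close>

definition unitary_mat :: "nat \<Rightarrow> complex mat \<Rightarrow> bool" where
  "unitary_mat n U \<longleftrightarrow> U \<in> carrier_mat n n \<and> mat_adjoint U * U = 1\<^sub>m n \<and> U * mat_adjoint U = 1\<^sub>m n"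

definition SU2 :: "complex mat \<Rightarrow> bool" where
  "SU2 U \<longleftrightarrow> unitary_mat 2 U \<and> det U = 1"

definition unit_vec2 :: "complex vec \<Rightarrow> bool" where
  "unit_vec2 v \<longleftrightarrow> v \<in> carrier_vec 2 \<and> (\<Sum>i<2. (cmod (v $ i))\<^sup>2) = 1"

definition kron :: "complex mat \<Rightarrow> complex mat \<Rightarrow> complex mat" where
  "kron A B = mat (dim_row A * dim_row B) (dim_col A * dim_col B)
     (\<lambda>(i,j). A $$ (i div dim_row B, j div dim_col B) * B $$ (i mod dim_row B, j mod dim_col B))"

definition kron_vec :: "complex vec \<Rightarrow> complex vec \<Rightarrow> complex vec" where
  "kron_vec v w = vec (dim_vec v * dim_vec w) (\<lambda>i. v $ (i div dim_vec w) * w $ (i mod dim_vec w))"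

definition ketbra :: "complex vec \<Rightarrow> complex mat" where
  "ketbra v = mat (dim_vec v) (dim_vec v) (\<lambda>(i,j). v $ i * cnj (v $ j))"

definition ket0 :: "complex vec" where "ket0 = vec 2 (\<lambda>i. if i = 0 then 1 else 0)"
definition ket1 :: "complex vec" where "ket1 = vec 2 (\<lambda>i. if i = 1 then 1 else 0)"
definition ket_plus :: "complex vec" where
  "ket_plus = vec 2 (\<lambda>i. complex_of_real (1 / sqrt 2))"

definition ptr1 :: "nat \<Rightarrow> nat \<Rightarrow> complex mat \<Rightarrow> complex mat" where
  "ptr1 m n A = mat n n (\<lambda>(i,j). \<Sum>k<m. A $$ (k*n + i, k*n + j))"

definition ptr2 :: "nat \<Rightarrow> nat \<Rightarrow> complex mat \<Rightarrow> complex mat" where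
  "ptr2 m n A = mat m m (\<lambda>(i,j). \<Sum>l<n. A $$ (i*n + l, j*n + l))"

text \<open>The swap operator on C^n (x) C^n: |x>|y> maps to |y>|x>.\<close>
definition swap_mat :: "nat \<Rightarrow> complex mat" where
  "swap_mat n = mat (n*n) (n*n) (\<lambda>(i,j). if i = (j mod n) * n + j div n then 1 else 0)"

definition stinespring_channel :: "complex mat \<Rightarrow> complex mat \<Rightarrow> complex mat" where
  "stinespring_channel U rho = ptr1 2 2 (U * kron (ketbra ket0) rho * mat_adjoint U)"

text \<open>The five-qubit circuit, qubits ordered (a, E, S, f1, f2).\<close>
definition gate_S :: "complex mat \<Rightarrow> complex mat" where
  "gate_S V = kron (1\<^sub>m 4) (kron V (1\<^sub>m 4))"

definition controlled_swap :: "complex mat" where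
  "controlled_swap = kron (ketbra ket0) (1\<^sub>m 16) + kron (ketbra ket1) (swap_mat 4)"

definition circuit :: "complex mat \<Rightarrow> complex mat \<Rightarrow> complex mat \<Rightarrow> complex mat" where
  "circuit U1 U2 Uk =
     gate_S (mat_adjoint Uk) * controlled_swap * kron (1\<^sub>m 2) (kron U1 U2)
       * controlled_swap * gate_S Uk"

definition initial_state :: "complex vec \<Rightarrow> complex vec \<Rightarrow> complex vec \<Rightarrow> complex vec" where
  "initial_state \<psi> \<phi>1 \<phi>2 =
     kron_vec ket_plus (kron_vec ket0 (kron_vec \<psi> (kron_vec \<phi>1 \<phi>2)))"

text \<open>Reduced density matrix of qubit S: trace out (a,E) (dimension 4) and (f1,f2) (dimension 4).\<close>
definition reduced_S :: "complex mat \<Rightarrow> complex mat" where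
  "reduced_S R = ptr2 2 4 (ptr1 4 8 R)"

end

theory Submission
  imports Defs
begin

(* After U_k, the ancilla |+> splits the register into two branches. In the |0> branch the pair
   (E,S) meets U1 and the pair (f1,f2) meets U2; in the |1> branch the controlled swaps exchange the
   two pairs around the middle layer, so (E,S) meets U2 instead and is moved back afterwards. With
   x = |0>(U_k psi), y = phi1 phi2 and W = 1 (x) U_k^dagger the final state is therefore
   (|0>(W U1 x)(U2 y) + |1>(W U2 x)(U1 y)) / sqrt 2.
   The branches are orthogonal in the ancilla, so tracing it out gives the equal mixture of the two
   pure branches; tracing out (f1,f2) only contributes the factors |U_j y|^2 = 1, and tracing out E
   turns the branch through U_j into U_k^dagger T_j(U_k rho U_k^dagger) U_k. *)

lemma sum_lessThan_mult_split:
  fixes f :: "nat \<Rightarrow> 'a::comm_monoid_add"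
  shows "(\<Sum>k<m*n. f k) = (\<Sum>a<m. \<Sum>b<n. f (a*n+b))"
proof (induction m)
  case 0
  then show ?case by simp
next
  case (Suc m)
  have split: "{..<Suc m * n} = {..<m*n} \<union> {m*n..<m*n+n}" by auto
  have "(\<Sum>k<Suc m*n. f k) = (\<Sum>k<m*n. f k) + (\<Sum>k\<in>{m*n..<m*n+n}. f k)"
    unfolding split by (rule sum.union_disjoint) auto
  also have "(\<Sum>k\<in>{m*n..<m*n+n}. f k) = (\<Sum>b<n. f (m*n+b))"
    using sum.shift_bounds_nat_ivl[of f 0 "m*n" n] by (simp add: add.commute atLeast0LessThan)
  finally show ?case using Suc by simp
qed

lemma mult_add_less_mult:
  fixes a b m n :: nat
  assumes "a < m" "b < n"
  shows "a*n + b < m*n"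
proof -
  have "a*n + b < (a+1)*n" using assms by simp
  also have "\<dots> \<le> m*n" using assms by (intro mult_right_mono) simp_all
  finally show ?thesis .
qed

lemma mod_less_of_less_mult: "i < m * n \<Longrightarrow> i mod n < (n::nat)"
  by (cases n) auto

lemma mod_mult_div_eq_div_mod:
  assumes "0 < (n::nat)" shows "(i mod (m*n)) div n = (i div n) mod m"
proof -
  have "i mod (m*n) = (i div n mod m) * n + i mod n"
    using mod_mult2_eq[of i n m] by (simp add: mult.commute)
  then show ?thesis using assms by simp
qed

lemma mod_mult_mod_eq: "(i mod (m*n)) mod n = (i mod (n::nat))"
  by (metis mod_mod_cancel dvd_triv_right)

lemma div_mult_eq_div_div: "i div (m*n) = i div n div (m::nat)"
  by (metis div_mult2_eq mult.commute)

lemma less_2_cases: "(i::nat) < 2 \<longleftrightarrow> i = 0 \<or> i = 1" by auto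

lemma sum_lessThan_2: "(\<Sum>i<2. f i) = f 0 + f (1::nat)" by (simp add: numeral_2_eq_2)

lemma index_mult_mat_vec_sum:
  "A \<in> carrier_mat m n \<Longrightarrow> v \<in> carrier_vec n \<Longrightarrow> i < m \<Longrightarrow> (A *\<^sub>v v) $ i = (\<Sum>k<n. A $$ (i,k) * v $ k)"
  by (simp add: scalar_prod_def row_def atLeast0LessThan)

lemma index_mult_mat_sum:
  "A \<in> carrier_mat m n \<Longrightarrow> B \<in> carrier_mat n p \<Longrightarrow> i < m \<Longrightarrow> j < p \<Longrightarrow>
    (A * B) $$ (i,j) = (\<Sum>k<n. A $$ (i,k) * B $$ (k,j))"
  by (simp add: scalar_prod_def row_def col_def atLeast0LessThan)

lemma mat_adjoint_dims [simp]:
  "dim_row (mat_adjoint A) = dim_col A" "dim_col (mat_adjoint A) = dim_row A"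
  unfolding mat_adjoint_def by simp_all

lemma index_mat_adjoint [simp]:
  "i < dim_col A \<Longrightarrow> j < dim_row A \<Longrightarrow> mat_adjoint (A::complex mat) $$ (i,j) = cnj (A $$ (j,i))"
  unfolding mat_adjoint_def mat_of_rows_def by (simp add: cols_def)

lemma mat_adjoint_carrier [simp]: "A \<in> carrier_mat n m \<Longrightarrow> mat_adjoint A \<in> carrier_mat m n"
  by (metis carrier_matD carrier_matI mat_adjoint_dims)

lemma mat_adjoint_adjoint [simp]: "mat_adjoint (mat_adjoint (A::complex mat)) = A"
  by (rule eq_matI) simp_all

lemma one_smult_mat [simp]: "(1::'a::semiring_1) \<cdot>\<^sub>m A = A"
  by (rule eq_matI) simp_all

lemma mult_smult_add_mult:
  fixes V A B W :: "'a::comm_semiring_0 mat"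
  assumes V: "V \<in> carrier_mat n n" and A: "A \<in> carrier_mat n n" and B: "B \<in> carrier_mat n n"
    and W: "W \<in> carrier_mat n n"
  shows "V * (c \<cdot>\<^sub>m A + c \<cdot>\<^sub>m B) * W = c \<cdot>\<^sub>m (V * A * W + V * B * W)"
proof -
  have VA: "V * A \<in> carrier_mat n n" and VB: "V * B \<in> carrier_mat n n"
    using V A B by simp_all
  have "V * (c \<cdot>\<^sub>m A + c \<cdot>\<^sub>m B) = c \<cdot>\<^sub>m (V * A) + c \<cdot>\<^sub>m (V * B)"
    using A B by (simp add: mult_add_distrib_mat[OF V, of _ n] mult_smult_distrib[OF V A]
        mult_smult_distrib[OF V B])
  then have "V * (c \<cdot>\<^sub>m A + c \<cdot>\<^sub>m B) * W = c \<cdot>\<^sub>m (V * A * W) + c \<cdot>\<^sub>m (V * B * W)"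
    using VA VB W by (simp add: add_mult_distrib_mat[of _ n n _ W n] mult_smult_assoc_mat[OF VA W]
        mult_smult_assoc_mat[OF VB W])
  then show ?thesis
    using VA VB W by (simp add: add_smult_distrib_left_mat[of _ n n])
qed

lemma cscalar_prod_self_sum: "v \<bullet>c v = (\<Sum>i<dim_vec v. v $ i * cnj (v $ i))"
  by (simp add: scalar_prod_def atLeast0LessThan)

lemma unitary_mat_cscalar_prod:
  assumes U: "unitary_mat n U" and v: "v \<in> carrier_vec n"
  shows "(U *\<^sub>v v) \<bullet>c (U *\<^sub>v v) = v \<bullet>c v"
proof -
  have Uc: "U \<in> carrier_mat n n" and UU: "mat_adjoint U * U = 1\<^sub>m n"
    using U unfolding unitary_mat_def by simp_all
  have orth: "(\<Sum>l<n. cnj (U $$ (l,i)) * U $$ (l,k)) = (if i = k then 1 else 0)"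
    if "i < n" "k < n" for i k
  proof -
    have "(mat_adjoint U * U) $$ (i,k) = (\<Sum>l<n. mat_adjoint U $$ (i,l) * U $$ (l,k))"
      using Uc that by (intro index_mult_mat_sum) auto
    also have "\<dots> = (\<Sum>l<n. cnj (U $$ (l,i)) * U $$ (l,k))"
      using Uc that by (intro sum.cong) auto
    finally show ?thesis using UU that by simp
  qed
  have "(U *\<^sub>v v) \<bullet>c (U *\<^sub>v v) =
      (\<Sum>l<n. (\<Sum>k<n. U $$ (l,k) * v $ k) * (\<Sum>i<n. cnj (U $$ (l,i)) * cnj (v $ i)))"
    using Uc v by (simp add: cscalar_prod_self_sum index_mult_mat_vec_sum[OF Uc v] sum_distrib_left
        del: index_mult_mat_vec)
  also have "\<dots> = (\<Sum>l<n. \<Sum>k<n. \<Sum>i<n. v $ k * cnj (v $ i) * (cnj (U $$ (l,i)) * U $$ (l,k)))"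
    by (simp add: sum_product mult_ac)
  also have "\<dots> = (\<Sum>k<n. \<Sum>l<n. \<Sum>i<n. v $ k * cnj (v $ i) * (cnj (U $$ (l,i)) * U $$ (l,k)))"
    by (rule sum.swap)
  also have "\<dots> = (\<Sum>k<n. \<Sum>i<n. \<Sum>l<n. v $ k * cnj (v $ i) * (cnj (U $$ (l,i)) * U $$ (l,k)))"
    by (rule sum.cong[OF refl], rule sum.swap)
  also have "\<dots> = (\<Sum>k<n. \<Sum>i<n. if i = k then v $ k * cnj (v $ i) else 0)"
    by (intro sum.cong refl) (simp add: orth flip: sum_distrib_left)
  also have "\<dots> = v \<bullet>c v"
    using v by (simp add: cscalar_prod_self_sum)
  finally show ?thesis .
qed

lemma unit_vec2_cscalar_prod:
  assumes v: "unit_vec2 v" shows "v \<bullet>c v = 1"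
proof -
  have "v \<bullet>c v = (\<Sum>i<2. v $ i * cnj (v $ i))"
    using v carrier_vecD unfolding unit_vec2_def by (metis cscalar_prod_self_sum)
  also have "\<dots> = (\<Sum>i<2. complex_of_real ((cmod (v $ i))\<^sup>2))"
    by (simp only: complex_norm_square)
  also have "\<dots> = complex_of_real (\<Sum>i<2. (cmod (v $ i))\<^sup>2)"
    by (simp only: of_real_sum)
  also have "\<dots> = 1"
    using v unfolding unit_vec2_def by simp
  finally show ?thesis .
qed

section \<open>Kronecker products\<close>

lemma kron_dims [simp]:
  "dim_row (kron A B) = dim_row A * dim_row B" "dim_col (kron A B) = dim_col A * dim_col B"
  unfolding kron_def by auto

lemma index_kron [simp]:
  "i < dim_row A * dim_row B \<Longrightarrow> j < dim_col A * dim_col B \<Longrightarrow>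
    kron A B $$ (i,j) = A $$ (i div dim_row B, j div dim_col B) * B $$ (i mod dim_row B, j mod dim_col B)"
  unfolding kron_def by simp

lemma kron_carrier_mat [simp]:
  "A \<in> carrier_mat m n \<Longrightarrow> B \<in> carrier_mat p q \<Longrightarrow> kron A B \<in> carrier_mat (m*p) (n*q)"
  by (metis carrier_matD carrier_matI kron_dims)

lemma dim_kron_vec [simp]: "dim_vec (kron_vec v w) = dim_vec v * dim_vec w"
  unfolding kron_vec_def by simp

lemma index_kron_vec [simp]:
  "i < dim_vec v * dim_vec w \<Longrightarrow> kron_vec v w $ i = v $ (i div dim_vec w) * w $ (i mod dim_vec w)"
  unfolding kron_vec_def by simp

lemma kron_vec_carrier_vec [simp]:
  "v \<in> carrier_vec m \<Longrightarrow> w \<in> carrier_vec n \<Longrightarrow> kron_vec v w \<in> carrier_vec (m*n)"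
  by (metis carrier_vecD carrier_vecI dim_kron_vec)

lemma kron_mult_kron_vec:
  assumes "dim_vec x = dim_col A" "dim_vec y = dim_col B"
  shows "kron A B *\<^sub>v kron_vec x y = kron_vec (A *\<^sub>v x) (B *\<^sub>v y)"
proof (rule eq_vecI)
  fix i assume "i < dim_vec (kron_vec (A *\<^sub>v x) (B *\<^sub>v y))"
  then have i: "i < dim_row A * dim_row B" by simp
  let ?r = "i div dim_row B" and ?s = "i mod dim_row B"
  have "(kron A B *\<^sub>v kron_vec x y) $ i = (\<Sum>k<dim_col A * dim_col B. kron A B $$ (i,k) * kron_vec x y $ k)"
    using i assms by (simp add: scalar_prod_def row_def atLeast0LessThan)
  also have "\<dots> = (\<Sum>a<dim_col A. \<Sum>b<dim_col B. A $$ (?r, a) * x $ a * (B $$ (?s, b) * y $ b))"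
    unfolding sum_lessThan_mult_split using i assms mult_add_less_mult
    by (intro sum.cong refl) (simp add: algebra_simps)
  also have "\<dots> = (\<Sum>a<dim_col A. A $$ (?r, a) * x $ a) * (\<Sum>b<dim_col B. B $$ (?s, b) * y $ b)"
    by (simp add: sum_product)
  also have "\<dots> = kron_vec (A *\<^sub>v x) (B *\<^sub>v y) $ i"
    using i assms less_mult_imp_div_less[OF i] mod_less_of_less_mult[OF i]
    by (simp add: scalar_prod_def row_def atLeast0LessThan)
  finally show "(kron A B *\<^sub>v kron_vec x y) $ i = kron_vec (A *\<^sub>v x) (B *\<^sub>v y) $ i" .
qed simp

lemma kron_vec_assoc: "kron_vec a (kron_vec b c) = kron_vec (kron_vec a b) c"
proof (rule eq_vecI)
  fix i assume "i < dim_vec (kron_vec (kron_vec a b) c)"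
  then have i: "i < dim_vec a * dim_vec b * dim_vec c" by simp
  then have "0 < dim_vec c" by (cases "dim_vec c") simp_all
  moreover have "i div dim_vec c < dim_vec a * dim_vec b" using i by (simp add: less_mult_imp_div_less)
  moreover have "i mod (dim_vec b * dim_vec c) < dim_vec b * dim_vec c"
    using i mod_less_of_less_mult by (simp add: mult.assoc)
  ultimately show "kron_vec a (kron_vec b c) $ i = kron_vec (kron_vec a b) c $ i"
    using i by (simp add: mult.assoc mod_mult_div_eq_div_mod mod_mult_mod_eq div_mult_eq_div_div)
qed (simp add: mult.assoc)

lemma kron_assoc: "kron A (kron B C) = kron (kron A B) C"
proof (rule eq_matI)
  fix i j assume "i < dim_row (kron (kron A B) C)" "j < dim_col (kron (kron A B) C)"
  then have i: "i < dim_row A * dim_row B * dim_row C" and j: "j < dim_col A * dim_col B * dim_col C"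
    by simp_all
  then have "0 < dim_row C" "0 < dim_col C" by (cases "dim_row C"; cases "dim_col C"; simp)+
  moreover have "i div dim_row C < dim_row A * dim_row B" "j div dim_col C < dim_col A * dim_col B"
    using i j by (simp_all add: less_mult_imp_div_less)
  moreover have "i mod (dim_row B * dim_row C) < dim_row B * dim_row C"
    "j mod (dim_col B * dim_col C) < dim_col B * dim_col C"
    using i j mod_less_of_less_mult by (simp_all add: mult.assoc)
  ultimately show "kron A (kron B C) $$ (i, j) = kron (kron A B) C $$ (i, j)"
    using i j by (simp add: mult.assoc mod_mult_div_eq_div_mod mod_mult_mod_eq div_mult_eq_div_div)
qed (simp_all add: mult.assoc)

lemma kron_one_one: "kron (1\<^sub>m m) (1\<^sub>m n) = 1\<^sub>m (m*n)"
proof (rule eq_matI)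
  fix i j assume "i < dim_row (1\<^sub>m (m*n))" "j < dim_col (1\<^sub>m (m*n))"
  then have i: "i < m*n" and j: "j < m*n" by simp_all
  have "(i div n = j div n \<and> i mod n = j mod n) = (i = j)"
    by (metis div_mult_mod_eq)
  then show "kron (1\<^sub>m m) (1\<^sub>m n) $$ (i, j) = 1\<^sub>m (m*n) $$ (i, j)"
    using i j less_mult_imp_div_less[OF i] less_mult_imp_div_less[OF j]
      mod_less_of_less_mult[OF i] mod_less_of_less_mult[OF j] by auto
qed simp_all

lemma kron_vec_add_left: "dim_vec a = dim_vec b \<Longrightarrow> kron_vec (a + b) z = kron_vec a z + kron_vec b z"
  by (rule eq_vecI) (simp_all add: algebra_simps less_mult_imp_div_less)

lemma kron_vec_smult_left: "kron_vec (k \<cdot>\<^sub>v a) z = k \<cdot>\<^sub>v kron_vec a z"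
  by (rule eq_vecI) (simp_all add: less_mult_imp_div_less)

lemma kron_vec_zero_left: "kron_vec (0\<^sub>v n) z = 0\<^sub>v (n * dim_vec z)"
  by (rule eq_vecI) (simp_all add: less_mult_imp_div_less)

lemma kron_vec_cscalar_prod: "kron_vec a b \<bullet>c kron_vec a b = (a \<bullet>c a) * (b \<bullet>c b)"
proof -
  have "kron_vec a b \<bullet>c kron_vec a b =
      (\<Sum>i<dim_vec a. \<Sum>j<dim_vec b. (a $ i * cnj (a $ i)) * (b $ j * cnj (b $ j)))"
    unfolding cscalar_prod_self_sum dim_kron_vec sum_lessThan_mult_split
  proof (intro sum.cong refl)
    fix i j assume "i \<in> {..<dim_vec a}" "j \<in> {..<dim_vec b}"
    then have i: "i < dim_vec a" and j: "j < dim_vec b" by simp_all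
    then have "dim_vec b \<noteq> 0" by linarith
    with i j have "i * dim_vec b + j < dim_vec a * dim_vec b"
      and "(i * dim_vec b + j) div dim_vec b = i" and "(i * dim_vec b + j) mod dim_vec b = j"
      by (simp_all add: mult_add_less_mult)
    then show "kron_vec a b $ (i * dim_vec b + j) * cnj (kron_vec a b $ (i * dim_vec b + j)) =
        (a $ i * cnj (a $ i)) * (b $ j * cnj (b $ j))"
      by simp
  qed
  then show ?thesis by (simp add: cscalar_prod_self_sum sum_product)
qed

lemma swap_mat_dims [simp]: "dim_row (swap_mat n) = n*n" "dim_col (swap_mat n) = n*n"
  unfolding swap_mat_def by simp_all

lemma swap_mat_mult_kron_vec:
  assumes p: "p \<in> carrier_vec n" and q: "q \<in> carrier_vec n"
  shows "swap_mat n *\<^sub>v kron_vec p q = kron_vec q p"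
proof (rule eq_vecI)
  fix i assume "i < dim_vec (kron_vec q p)"
  then have i: "i < n * n" using p q by simp
  have im: "i mod n < n" and id: "i div n < n"
    using i less_mult_imp_div_less mod_less_of_less_mult by blast+
  have "(swap_mat n *\<^sub>v kron_vec p q) $ i = (\<Sum>j<n*n. swap_mat n $$ (i,j) * kron_vec p q $ j)"
    using i p q by (simp add: scalar_prod_def atLeast0LessThan)
  also have "\<dots> = (\<Sum>a<n. \<Sum>b<n. if b = i div n then (if a = i mod n then p $ a * q $ b else 0) else 0)"
    unfolding sum_lessThan_mult_split
  proof (intro sum.cong refl)
    fix a b assume a: "a \<in> {..<n}" and b: "b \<in> {..<n}"
    have "(i = b * n + a) \<longleftrightarrow> (a = i mod n \<and> b = i div n)"
    proof
      assume "i = b * n + a"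
      then show "a = i mod n \<and> b = i div n" using a by simp
    next
      assume "a = i mod n \<and> b = i div n"
      then show "i = b * n + a" by simp
    qed
    then show "swap_mat n $$ (i, a * n + b) * kron_vec p q $ (a * n + b) =
        (if b = i div n then (if a = i mod n then p $ a * q $ b else 0) else 0)"
      using mult_add_less_mult[of a n b n] i a b p q by (simp add: swap_mat_def)
  qed
  also have "\<dots> = kron_vec q p $ i"
    using im id i p q by (simp add: sum.delta')
  finally show "(swap_mat n *\<^sub>v kron_vec p q) $ i = kron_vec q p $ i" .
qed (use p q in \<open>simp add: swap_mat_def\<close>)

section \<open>Projectors and partial traces\<close>

lemma ketbra_dims [simp]: "dim_row (ketbra v) = dim_vec v" "dim_col (ketbra v) = dim_vec v"
  unfolding ketbra_def by simp_all

lemma ketbra_carrier_mat [simp]: "ketbra v \<in> carrier_mat (dim_vec v) (dim_vec v)"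
  unfolding ketbra_def by simp

lemma ketbra_carrier_mat_of: "v \<in> carrier_vec n \<Longrightarrow> ketbra v \<in> carrier_mat n n"
  using ketbra_carrier_mat[of v] by (simp add: carrier_vecD)

lemma ketbra_smult: "ketbra (c \<cdot>\<^sub>v v) = (c * cnj c) \<cdot>\<^sub>m ketbra v"
  by (rule eq_matI) (simp_all add: ketbra_def)

lemma kron_ketbra: "kron (ketbra a) (ketbra b) = ketbra (kron_vec a b)"
proof (rule eq_matI)
  fix i j assume "i < dim_row (ketbra (kron_vec a b))" "j < dim_col (ketbra (kron_vec a b))"
  then have i: "i < dim_vec a * dim_vec b" and j: "j < dim_vec a * dim_vec b" by simp_all
  show "kron (ketbra a) (ketbra b) $$ (i,j) = ketbra (kron_vec a b) $$ (i,j)"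
    using i j less_mult_imp_div_less[OF i] less_mult_imp_div_less[OF j]
      mod_less_of_less_mult[OF i] mod_less_of_less_mult[OF j] by (simp add: ketbra_def)
qed simp_all

lemma mult_ketbra_mult_adjoint:
  assumes A: "(A::complex mat) \<in> carrier_mat m n" and v: "v \<in> carrier_vec n"
  shows "A * ketbra v * mat_adjoint A = ketbra (A *\<^sub>v v)"
proof (rule eq_matI)
  fix i j assume "i < dim_row (ketbra (A *\<^sub>v v))" "j < dim_col (ketbra (A *\<^sub>v v))"
  then have i: "i < m" and j: "j < m" using A by simp_all
  have K: "ketbra v \<in> carrier_mat n n" by (rule ketbra_carrier_mat_of[OF v])
  have "(A * ketbra v * mat_adjoint A) $$ (i,j) = (\<Sum>l<n. (A * ketbra v) $$ (i,l) * mat_adjoint A $$ (l,j))"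
    using A K i j by (intro index_mult_mat_sum) auto
  also have "\<dots> = (\<Sum>l<n. (A * ketbra v) $$ (i,l) * cnj (A $$ (j,l)))"
    using A j by (intro sum.cong) auto
  also have "\<dots> = (\<Sum>l<n. \<Sum>k<n. (A $$ (i,k) * v $ k) * (cnj (A $$ (j,l)) * cnj (v $ l)))"
  proof (intro sum.cong refl)
    fix l assume "l \<in> {..<n}"
    then have l: "l < n" by simp
    have "(A * ketbra v) $$ (i,l) = (\<Sum>k<n. A $$ (i,k) * ketbra v $$ (k,l))"
      by (rule index_mult_mat_sum[OF A K i l])
    also have "\<dots> = (\<Sum>k<n. A $$ (i,k) * (v $ k * cnj (v $ l)))"
      using l v by (intro sum.cong refl) (simp add: ketbra_def)
    finally show "(A * ketbra v) $$ (i,l) * cnj (A $$ (j,l)) =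
        (\<Sum>k<n. (A $$ (i,k) * v $ k) * (cnj (A $$ (j,l)) * cnj (v $ l)))"
      by (simp add: sum_distrib_left sum_distrib_right mult_ac)
  qed
  also have "\<dots> = (\<Sum>k<n. A $$ (i,k) * v $ k) * (\<Sum>l<n. cnj (A $$ (j,l)) * cnj (v $ l))"
    by (subst sum.swap) (simp add: sum_product)
  also have "\<dots> = ketbra (A *\<^sub>v v) $$ (i,j)"
    using A v i j by (simp add: ketbra_def index_mult_mat_vec_sum[OF A v] del: index_mult_mat_vec)
  finally show "(A * ketbra v * mat_adjoint A) $$ (i,j) = ketbra (A *\<^sub>v v) $$ (i,j)" .
qed (use A v in simp_all)

lemma ptr1_carrier_mat [simp]: "ptr1 m n A \<in> carrier_mat n n"
  unfolding ptr1_def by simp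

lemma ptr1_add:
  "A \<in> carrier_mat (m*n) (m*n) \<Longrightarrow> B \<in> carrier_mat (m*n) (m*n) \<Longrightarrow>
    ptr1 m n (A + B) = ptr1 m n A + ptr1 m n B"
  by (rule eq_matI) (auto simp: ptr1_def sum.distrib mult_add_less_mult)

lemma ptr1_smult:
  "A \<in> carrier_mat (m*n) (m*n) \<Longrightarrow> ptr1 m n (c \<cdot>\<^sub>m A) = c \<cdot>\<^sub>m ptr1 m n A"
  by (rule eq_matI) (auto simp: ptr1_def sum_distrib_left mult_add_less_mult)

lemma ptr2_add:
  "A \<in> carrier_mat (m*n) (m*n) \<Longrightarrow> B \<in> carrier_mat (m*n) (m*n) \<Longrightarrow>
    ptr2 m n (A + B) = ptr2 m n A + ptr2 m n B"
  by (rule eq_matI) (auto simp: ptr2_def sum.distrib mult_add_less_mult)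

lemma ptr2_smult:
  "A \<in> carrier_mat (m*n) (m*n) \<Longrightarrow> ptr2 m n (c \<cdot>\<^sub>m A) = c \<cdot>\<^sub>m ptr2 m n A"
  by (rule eq_matI) (auto simp: ptr2_def sum_distrib_left mult_add_less_mult)

lemma ptr1_ptr1: "ptr1 m' n (ptr1 m (m'*n) A) = ptr1 (m*m') n A"
proof (rule eq_matI)
  fix i j assume "i < dim_row (ptr1 (m*m') n A)" "j < dim_col (ptr1 (m*m') n A)"
  then have i: "i < n" and j: "j < n" by (simp_all add: ptr1_def)
  have "ptr1 m' n (ptr1 m (m'*n) A) $$ (i,j) =
      (\<Sum>l<m'. \<Sum>k<m. A $$ (k*(m'*n) + (l*n+i), k*(m'*n) + (l*n+j)))"
    unfolding ptr1_def using i j by (auto intro!: sum.cong simp: mult_add_less_mult)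
  also have "\<dots> = (\<Sum>k<m. \<Sum>l<m'. A $$ (k*(m'*n) + (l*n+i), k*(m'*n) + (l*n+j)))"
    by (rule sum.swap)
  also have "\<dots> = ptr1 (m*m') n A $$ (i,j)"
    using i j by (simp add: ptr1_def sum_lessThan_mult_split algebra_simps)
  finally show "ptr1 m' n (ptr1 m (m'*n) A) $$ (i,j) = ptr1 (m*m') n A $$ (i,j)" .
qed (simp_all add: ptr1_def)

lemma ptr1_kron:
  assumes A: "A \<in> carrier_mat (m*n) (m*n)" and B: "B \<in> carrier_mat k k"
  shows "ptr1 m (n*k) (kron A B) = kron (ptr1 m n A) B"
proof (rule eq_matI)
  fix i j assume "i < dim_row (kron (ptr1 m n A) B)" "j < dim_col (kron (ptr1 m n A) B)"
  then have i: "i < n*k" and j: "j < n*k" using B by (simp_all add: ptr1_def)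
  then have k: "0 < k" by (cases k) simp_all
  have entry: "kron A B $$ (a*(n*k) + i, a*(n*k) + j) =
      A $$ (a*n + i div k, a*n + j div k) * B $$ (i mod k, j mod k)" if a: "a < m" for a
  proof -
    have "a*(n*k) + i < m*n*k" "a*(n*k) + j < m*n*k"
      using mult_add_less_mult[OF a i] mult_add_less_mult[OF a j] by (simp_all add: mult.assoc)
    moreover have "(a*(n*k) + x) div k = a*n + x div k" "(a*(n*k) + x) mod k = x mod k" for x
    proof -
      have shift: "a*(n*k) + x = x + (a*n)*k" by (simp add: mult.assoc)
      show "(a*(n*k) + x) div k = a*n + x div k" unfolding shift using k by simp
      show "(a*(n*k) + x) mod k = x mod k" unfolding shift by simp
    qed
    ultimately show ?thesis using A B by simp
  qed
  have "ptr1 m (n*k) (kron A B) $$ (i,j) =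
      (\<Sum>a<m. A $$ (a*n + i div k, a*n + j div k)) * B $$ (i mod k, j mod k)"
    using i j by (simp add: ptr1_def entry sum_distrib_right)
  also have "\<dots> = kron (ptr1 m n A) B $$ (i,j)"
    using B i j less_mult_imp_div_less[OF i] less_mult_imp_div_less[OF j]
    by (simp add: ptr1_def)
  finally show "ptr1 m (n*k) (kron A B) $$ (i,j) = kron (ptr1 m n A) B $$ (i,j)" .
qed (use B in \<open>simp_all add: ptr1_def\<close>)

lemma ptr2_kron_ketbra:
  assumes A: "A \<in> carrier_mat m m" and q: "q \<in> carrier_vec n"
  shows "ptr2 m n (kron A (ketbra q)) = (q \<bullet>c q) \<cdot>\<^sub>m A"
proof (rule eq_matI)
  fix i j assume "i < dim_row ((q \<bullet>c q) \<cdot>\<^sub>m A)" "j < dim_col ((q \<bullet>c q) \<cdot>\<^sub>m A)"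
  then have i: "i < m" and j: "j < m" using A by simp_all
  have "ptr2 m n (kron A (ketbra q)) $$ (i,j) = (\<Sum>l<n. A $$ (i,j) * (q $ l * cnj (q $ l)))"
    using A q i j by (auto simp: ptr2_def ketbra_def mult_add_less_mult intro!: sum.cong)
  also have "\<dots> = A $$ (i,j) * (q \<bullet>c q)"
    using q by (simp add: cscalar_prod_self_sum sum_distrib_left)
  finally show "ptr2 m n (kron A (ketbra q)) $$ (i,j) = ((q \<bullet>c q) \<cdot>\<^sub>m A) $$ (i,j)"
    using A i j by (simp add: mult.commute)
qed (use A in \<open>simp_all add: ptr2_def\<close>)

lemma index_kron_one_mult_vec:
  assumes V: "V \<in> carrier_mat n n" and p: "p \<in> carrier_vec (m*n)" and k: "k < m" and i: "i < n"
  shows "(kron (1\<^sub>m m) V *\<^sub>v p) $ (k*n + i) = (\<Sum>b<n. V $$ (i,b) * p $ (k*n + b))"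
proof -
  have KV: "kron (1\<^sub>m m) V \<in> carrier_mat (m*n) (m*n)" using V by simp
  have "(kron (1\<^sub>m m) V *\<^sub>v p) $ (k*n + i) =
      (\<Sum>a<m. \<Sum>b<n. kron (1\<^sub>m m) V $$ (k*n + i, a*n + b) * p $ (a*n + b))"
    using index_mult_mat_vec_sum[OF KV p mult_add_less_mult[OF k i]] by (simp add: sum_lessThan_mult_split)
  also have "\<dots> = (\<Sum>a<m. \<Sum>b<n. if a = k then V $$ (i,b) * p $ (a*n + b) else 0)"
    using V k i mult_add_less_mult[OF k i] by (intro sum.cong refl) (auto simp: mult_add_less_mult)
  also have "\<dots> = (\<Sum>b<n. V $$ (i,b) * p $ (k*n + b))"
    using k by (subst sum.swap) simp
  finally show ?thesis .
qed

lemma ptr1_ketbra_kron_one_mult: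
  assumes V: "V \<in> carrier_mat n n" and p: "p \<in> carrier_vec (m*n)"
  shows "ptr1 m n (ketbra (kron (1\<^sub>m m) V *\<^sub>v p)) = V * ptr1 m n (ketbra p) * mat_adjoint V"
proof (rule eq_matI)
  fix i j assume "i < dim_row (V * ptr1 m n (ketbra p) * mat_adjoint V)"
    "j < dim_col (V * ptr1 m n (ketbra p) * mat_adjoint V)"
  then have i: "i < n" and j: "j < n" using V by simp_all
  let ?f = "\<lambda>k b c. V $$ (i,b) * p $ (k*n + b) * (cnj (V $$ (j,c)) * cnj (p $ (k*n + c)))"
  have P: "ptr1 m n (ketbra p) \<in> carrier_mat n n" by (simp add: ptr1_def)
  have "ptr1 m n (ketbra (kron (1\<^sub>m m) V *\<^sub>v p)) $$ (i,j) = (\<Sum>k<m. \<Sum>b<n. \<Sum>c<n. ?f k b c)"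
  proof (unfold ptr1_def, simp add: i j, intro sum.cong refl)
    fix k assume "k \<in> {..<m}"
    then have k: "k < m" by simp
    show "ketbra (kron (1\<^sub>m m) V *\<^sub>v p) $$ (k*n + i, k*n + j) = (\<Sum>b<n. \<Sum>c<n. ?f k b c)"
      using V p mult_add_less_mult[OF k i] mult_add_less_mult[OF k j]
      by (simp add: ketbra_def index_kron_one_mult_vec[OF V p k i] index_kron_one_mult_vec[OF V p k j]
          sum_product del: index_mult_mat_vec)
  qed
  also have "\<dots> = (\<Sum>b<n. \<Sum>k<m. \<Sum>c<n. ?f k b c)"
    by (rule sum.swap)
  also have "\<dots> = (\<Sum>b<n. \<Sum>c<n. \<Sum>k<m. ?f k b c)"
    by (rule sum.cong[OF refl], rule sum.swap)
  also have "\<dots> = (\<Sum>c<n. \<Sum>b<n. \<Sum>k<m. ?f k b c)"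
    by (rule sum.swap)
  also have "\<dots> = (\<Sum>c<n. (V * ptr1 m n (ketbra p)) $$ (i,c) * mat_adjoint V $$ (c,j))"
  proof (intro sum.cong refl)
    fix c assume "c \<in> {..<n}"
    then have c: "c < n" by simp
    have P_entry: "ptr1 m n (ketbra p) $$ (b,c) = (\<Sum>k<m. p $ (k*n + b) * cnj (p $ (k*n + c)))"
      if "b < n" for b
      using that c p mult_add_less_mult by (auto simp: ptr1_def ketbra_def intro!: sum.cong)
    have "(V * ptr1 m n (ketbra p)) $$ (i,c) = (\<Sum>b<n. V $$ (i,b) * ptr1 m n (ketbra p) $$ (b,c))"
      by (rule index_mult_mat_sum[OF V P i c])
    then show "(\<Sum>b<n. \<Sum>k<m. ?f k b c) = (V * ptr1 m n (ketbra p)) $$ (i,c) * mat_adjoint V $$ (c,j)"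
      using V c j by (simp add: P_entry sum_distrib_left sum_distrib_right mult_ac)
  qed
  also have "\<dots> = (V * ptr1 m n (ketbra p) * mat_adjoint V) $$ (i,j)"
    using V P i j by (intro index_mult_mat_sum[symmetric]) auto
  finally show "ptr1 m n (ketbra (kron (1\<^sub>m m) V *\<^sub>v p)) $$ (i,j) = (V * ptr1 m n (ketbra p) * mat_adjoint V) $$ (i,j)" .
qed (use V in \<open>simp_all add: ptr1_def\<close>)

lemma ket_carriers [simp]:
  "ket0 \<in> carrier_vec 2" "ket1 \<in> carrier_vec 2" "ket_plus \<in> carrier_vec 2"
  by (simp_all add: ket0_def ket1_def ket_plus_def)

lemma ket_dims [simp]: "dim_vec ket0 = 2" "dim_vec ket1 = 2" "dim_vec ket_plus = 2"
  by (simp_all add: ket0_def ket1_def ket_plus_def)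

lemma ketbra_mult_kets:
  "ketbra ket0 *\<^sub>v ket0 = ket0" "ketbra ket0 *\<^sub>v ket1 = 0\<^sub>v 2"
  "ketbra ket1 *\<^sub>v ket0 = 0\<^sub>v 2" "ketbra ket1 *\<^sub>v ket1 = ket1"
  by (rule eq_vecI; simp add: ketbra_def ket0_def ket1_def scalar_prod_def atLeast0LessThan
      sum_lessThan_2 less_2_cases; elim disjE; simp)+

lemma ket_plus_eq: "ket_plus = complex_of_real (1 / sqrt 2) \<cdot>\<^sub>v (ket0 + ket1)"
  by (rule eq_vecI; simp add: ket_plus_def ket0_def ket1_def less_2_cases; elim disjE; simp)

lemma cmod_inv_sqrt2_sq: "complex_of_real (1 / sqrt 2) * cnj (complex_of_real (1 / sqrt 2)) = 1/2"
proof -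
  have "(1 / sqrt 2) * (1 / sqrt 2) = (1/2::real)"
    by (simp add: power2_eq_square[symmetric] power_divide)
  then show ?thesis by (metis complex_cnj_complex_of_real of_real_mult of_real_divide of_real_1 of_real_numeral)
qed

lemma ptr1_ketbra_ket0_ket1:
  assumes X: "X \<in> carrier_vec n" and Y: "Y \<in> carrier_vec n"
  shows "ptr1 2 n (ketbra (kron_vec ket0 X + kron_vec ket1 Y)) = ketbra X + ketbra Y"
proof (rule eq_matI)
  let ?v = "kron_vec ket0 X + kron_vec ket1 Y"
  fix i j assume "i < dim_row (ketbra X + ketbra Y)" "j < dim_col (ketbra X + ketbra Y)"
  then have i: "i < n" and j: "j < n" using X Y by simp_all
  show "ptr1 2 n (ketbra ?v) $$ (i,j) = (ketbra X + ketbra Y) $$ (i,j)"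
    using i j X Y by (simp add: ptr1_def ketbra_def sum_lessThan_2 ket0_def ket1_def)
qed (use X Y in \<open>simp_all add: ptr1_def\<close>)

lemma stinespring_channel_ketbra:
  assumes U: "U \<in> carrier_mat 4 4" and v: "v \<in> carrier_vec 2"
  shows "stinespring_channel U (ketbra v) = ptr1 2 2 (ketbra (U *\<^sub>v kron_vec ket0 v))"
proof -
  have "kron_vec ket0 v \<in> carrier_vec 4" using kron_vec_carrier_vec[OF ket_carriers(1) v] by simp
  then show ?thesis
    unfolding stinespring_channel_def kron_ketbra by (simp add: mult_ketbra_mult_adjoint[OF U])
qed

lemma ptr1_branch_eq_conj_stinespring_channel:
  assumes U: "U \<in> carrier_mat 4 4" and V: "V \<in> carrier_mat 2 2" and \<psi>: "\<psi> \<in> carrier_vec 2"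
  shows "ptr1 2 2 (ketbra (kron (1\<^sub>m 2) (mat_adjoint V) *\<^sub>v (U *\<^sub>v kron_vec ket0 (V *\<^sub>v \<psi>)))) =
    mat_adjoint V * stinespring_channel U (V * ketbra \<psi> * mat_adjoint V) * V"
proof -
  have "U *\<^sub>v kron_vec ket0 (V *\<^sub>v \<psi>) \<in> carrier_vec (2*2)"
    using U kron_vec_carrier_vec[OF ket_carriers(1) mult_mat_vec_carrier[OF V \<psi>]] by simp
  then show ?thesis
    using ptr1_ketbra_kron_one_mult[OF mat_adjoint_carrier[OF V]] U V \<psi>
    by (simp add: stinespring_channel_ketbra mult_ketbra_mult_adjoint)
qed

lemma unitary_mult_product_state_cscalar_prod:
  "unitary_mat 4 U \<Longrightarrow> unit_vec2 a \<Longrightarrow> unit_vec2 b \<Longrightarrow>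
    (U *\<^sub>v kron_vec a b) \<bullet>c (U *\<^sub>v kron_vec a b) = 1"
  using unitary_mat_cscalar_prod[of 4 U "kron_vec a b"] kron_vec_cscalar_prod[of a b]
    unit_vec2_cscalar_prod[of a] unit_vec2_cscalar_prod[of b] kron_vec_carrier_vec[of a 2 b 2]
  by (simp add: unit_vec2_def)

section \<open>The circuit\<close>

lemma controlled_swap_terms_carrier:
  "kron (ketbra ket0) (1\<^sub>m 16) \<in> carrier_mat 32 32" "kron (ketbra ket1) (swap_mat 4) \<in> carrier_mat 32 32"
  by (intro carrier_matI; simp)+

lemma controlled_swap_carrier [simp]: "controlled_swap \<in> carrier_mat 32 32"
  unfolding controlled_swap_def using controlled_swap_terms_carrier by simp

lemma controlled_swap_branches:
  assumes p: "p \<in> carrier_vec 4" and q: "q \<in> carrier_vec 4"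
  shows "controlled_swap *\<^sub>v kron_vec ket0 (kron_vec p q) = kron_vec ket0 (kron_vec p q)"
    and "controlled_swap *\<^sub>v kron_vec ket1 (kron_vec p q) = kron_vec ket1 (kron_vec q p)"
proof -
  have pq: "kron_vec p q \<in> carrier_vec 16" "kron_vec q p \<in> carrier_vec 16"
    using kron_vec_carrier_vec[OF p q] kron_vec_carrier_vec[OF q p] by simp_all
  have distrib: "controlled_swap *\<^sub>v kron_vec k (kron_vec p q) =
      kron_vec (ketbra ket0 *\<^sub>v k) (kron_vec p q) + kron_vec (ketbra ket1 *\<^sub>v k) (kron_vec q p)"
    if k: "k \<in> carrier_vec 2" for k
  proof -
    have dims: "dim_vec k = 2" "dim_vec (kron_vec p q) = 16"
      using carrier_vecD[OF k] carrier_vecD[OF pq(1)] by simp_all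
    have "kron_vec k (kron_vec p q) \<in> carrier_vec 32"
      using kron_vec_carrier_vec[OF k pq(1)] by simp
    then have "controlled_swap *\<^sub>v kron_vec k (kron_vec p q) =
        kron (ketbra ket0) (1\<^sub>m 16) *\<^sub>v kron_vec k (kron_vec p q)
        + kron (ketbra ket1) (swap_mat 4) *\<^sub>v kron_vec k (kron_vec p q)"
      unfolding controlled_swap_def by (rule add_mult_distrib_mat_vec[OF controlled_swap_terms_carrier])
    also have "kron (ketbra ket0) (1\<^sub>m 16) *\<^sub>v kron_vec k (kron_vec p q) = kron_vec (ketbra ket0 *\<^sub>v k) (kron_vec p q)"
      using dims pq by (simp add: kron_mult_kron_vec[of k _ "kron_vec p q"])
    also have "kron (ketbra ket1) (swap_mat 4) *\<^sub>v kron_vec k (kron_vec p q) = kron_vec (ketbra ket1 *\<^sub>v k) (kron_vec q p)"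
      using dims p q by (simp add: kron_mult_kron_vec[of k _ "kron_vec p q"] swap_mat_mult_kron_vec)
    finally show ?thesis .
  qed
  have "kron_vec ket0 (kron_vec p q) \<in> carrier_vec 32" "kron_vec ket1 (kron_vec q p) \<in> carrier_vec 32"
    using kron_vec_carrier_vec[OF ket_carriers(1) pq(1)] kron_vec_carrier_vec[OF ket_carriers(2) pq(2)]
    by simp_all
  then show "controlled_swap *\<^sub>v kron_vec ket0 (kron_vec p q) = kron_vec ket0 (kron_vec p q)"
    and "controlled_swap *\<^sub>v kron_vec ket1 (kron_vec p q) = kron_vec ket1 (kron_vec q p)"
    using pq carrier_vecD[OF p] carrier_vecD[OF q]
    by (simp_all add: distrib ketbra_mult_kets kron_vec_zero_left)
qed

(* Every state of the circuit after its first gate has this form, with p, p' on the pair (E,S)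
   and q, q' on the pair (f1,f2). *)
definition branch_state :: "complex vec \<Rightarrow> complex vec \<Rightarrow> complex vec \<Rightarrow> complex vec \<Rightarrow> complex vec" where
  "branch_state p q p' q' = complex_of_real (1 / sqrt 2) \<cdot>\<^sub>v
     (kron_vec ket0 (kron_vec p q) + kron_vec ket1 (kron_vec p' q'))"

lemma kron_vec_3_carrier:
  "k \<in> carrier_vec 2 \<Longrightarrow> p \<in> carrier_vec 4 \<Longrightarrow> q \<in> carrier_vec 4 \<Longrightarrow> kron_vec k (kron_vec p q) \<in> carrier_vec 32"
  using kron_vec_carrier_vec[of k 2 "kron_vec p q" 16] kron_vec_carrier_vec[of p 4 q 4] by simp

lemma mult_branch_state:
  assumes M: "M \<in> carrier_mat 32 32"
    and p: "p \<in> carrier_vec 4" and q: "q \<in> carrier_vec 4" and p': "p' \<in> carrier_vec 4" and q': "q' \<in> carrier_vec 4"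
  shows "M *\<^sub>v branch_state p q p' q' = complex_of_real (1 / sqrt 2) \<cdot>\<^sub>v
      (M *\<^sub>v kron_vec ket0 (kron_vec p q) + M *\<^sub>v kron_vec ket1 (kron_vec p' q'))"
  unfolding branch_state_def using kron_vec_3_carrier[OF _ p q] kron_vec_3_carrier[OF _ p' q']
  by (simp add: mult_mat_vec[OF M] mult_add_distrib_mat_vec[OF M])

lemma controlled_swap_branch_state:
  "p \<in> carrier_vec 4 \<Longrightarrow> q \<in> carrier_vec 4 \<Longrightarrow> p' \<in> carrier_vec 4 \<Longrightarrow> q' \<in> carrier_vec 4 \<Longrightarrow>
    controlled_swap *\<^sub>v branch_state p q p' q' = branch_state p q q' p'"
  by (subst mult_branch_state) (simp_all add: controlled_swap_branches branch_state_def)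

lemma gate_pair_branch_state:
  assumes U1: "U1 \<in> carrier_mat 4 4" and U2: "U2 \<in> carrier_mat 4 4"
    and "p \<in> carrier_vec 4" "q \<in> carrier_vec 4" "p' \<in> carrier_vec 4" "q' \<in> carrier_vec 4"
  shows "kron (1\<^sub>m 2) (kron U1 U2) *\<^sub>v branch_state p q p' q' =
    branch_state (U1 *\<^sub>v p) (U2 *\<^sub>v q) (U1 *\<^sub>v p') (U2 *\<^sub>v q')"
proof -
  have "kron (1\<^sub>m 2) (kron U1 U2) \<in> carrier_mat 32 32"
    using U1 U2 by (intro carrier_matI) simp_all
  then show ?thesis
    using assms by (subst mult_branch_state) (simp_all add: kron_mult_kron_vec branch_state_def)
qed

lemma gate_S_eq: "gate_S V = kron (1\<^sub>m 2) (kron (kron (1\<^sub>m 2) V) (1\<^sub>m 4))"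
proof -
  have "gate_S V = kron (kron (1\<^sub>m 2) (1\<^sub>m 2)) (kron V (1\<^sub>m 4))"
    unfolding gate_S_def kron_one_one by simp
  then show ?thesis by (simp add: kron_assoc)
qed

lemma gate_S_carrier: "V \<in> carrier_mat 2 2 \<Longrightarrow> gate_S V \<in> carrier_mat 32 32"
  unfolding gate_S_def by (intro carrier_matI) simp_all

lemma gate_S_mult_kron_vec:
  "V \<in> carrier_mat 2 2 \<Longrightarrow> k \<in> carrier_vec 2 \<Longrightarrow> p \<in> carrier_vec 4 \<Longrightarrow> q \<in> carrier_vec 4 \<Longrightarrow>
    gate_S V *\<^sub>v kron_vec k (kron_vec p q) = kron_vec k (kron_vec (kron (1\<^sub>m 2) V *\<^sub>v p) q)"
  by (simp add: gate_S_eq kron_mult_kron_vec)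

lemma gate_S_branch_state:
  "V \<in> carrier_mat 2 2 \<Longrightarrow> p \<in> carrier_vec 4 \<Longrightarrow> q \<in> carrier_vec 4 \<Longrightarrow> p' \<in> carrier_vec 4 \<Longrightarrow> q' \<in> carrier_vec 4 \<Longrightarrow>
    gate_S V *\<^sub>v branch_state p q p' q' = branch_state (kron (1\<^sub>m 2) V *\<^sub>v p) q (kron (1\<^sub>m 2) V *\<^sub>v p') q'"
  by (subst mult_branch_state) (simp_all add: gate_S_carrier gate_S_mult_kron_vec branch_state_def)

lemma gate_S_initial_state:
  assumes V: "V \<in> carrier_mat 2 2" and \<psi>: "\<psi> \<in> carrier_vec 2" and \<phi>1: "\<phi>1 \<in> carrier_vec 2" and \<phi>2: "\<phi>2 \<in> carrier_vec 2"
  shows "gate_S V *\<^sub>v initial_state \<psi> \<phi>1 \<phi>2 =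
    branch_state (kron_vec ket0 (V *\<^sub>v \<psi>)) (kron_vec \<phi>1 \<phi>2) (kron_vec ket0 (V *\<^sub>v \<psi>)) (kron_vec \<phi>1 \<phi>2)"
proof -
  have "initial_state \<psi> \<phi>1 \<phi>2 =
      branch_state (kron_vec ket0 \<psi>) (kron_vec \<phi>1 \<phi>2) (kron_vec ket0 \<psi>) (kron_vec \<phi>1 \<phi>2)"
    unfolding initial_state_def branch_state_def
    by (simp add: kron_vec_assoc ket_plus_eq kron_vec_smult_left kron_vec_add_left)
  moreover have "kron (1\<^sub>m 2) V *\<^sub>v kron_vec ket0 \<psi> = kron_vec ket0 (V *\<^sub>v \<psi>)"
    using V \<psi> by (simp add: kron_mult_kron_vec)
  ultimately show ?thesis
    using assms kron_vec_carrier_vec[OF ket_carriers(1) \<psi>] kron_vec_carrier_vec[OF \<phi>1 \<phi>2]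
    by (simp add: gate_S_branch_state)
qed

lemma circuit_mult_vec:
  assumes U1: "U1 \<in> carrier_mat 4 4" and U2: "U2 \<in> carrier_mat 4 4" and Uk: "Uk \<in> carrier_mat 2 2"
    and v: "v \<in> carrier_vec 32"
  shows "circuit U1 U2 Uk *\<^sub>v v = gate_S (mat_adjoint Uk) *\<^sub>v (controlled_swap *\<^sub>v
    (kron (1\<^sub>m 2) (kron U1 U2) *\<^sub>v (controlled_swap *\<^sub>v (gate_S Uk *\<^sub>v v))))"
proof -
  let ?G = "gate_S Uk" and ?G' = "gate_S (mat_adjoint Uk)" and ?C = controlled_swap
    and ?K = "kron (1\<^sub>m 2) (kron U1 U2)"
  have G: "?G \<in> carrier_mat 32 32" and G': "?G' \<in> carrier_mat 32 32"
    using Uk by (simp_all add: gate_S_carrier)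
  have K: "?K \<in> carrier_mat 32 32"
    using U1 U2 by (intro carrier_matI) simp_all
  have GC: "?G' * ?C \<in> carrier_mat 32 32" and GCK: "?G' * ?C * ?K \<in> carrier_mat 32 32"
    and GCKC: "?G' * ?C * ?K * ?C \<in> carrier_mat 32 32"
    using G' K controlled_swap_carrier by (meson mult_carrier_mat)+
  have Gv: "?G *\<^sub>v v \<in> carrier_vec 32" using G v by simp
  have CGv: "?C *\<^sub>v (?G *\<^sub>v v) \<in> carrier_vec 32"
    by (rule mult_mat_vec_carrier[OF controlled_swap_carrier Gv])
  have KCGv: "?K *\<^sub>v (?C *\<^sub>v (?G *\<^sub>v v)) \<in> carrier_vec 32" using K CGv by simp
  have "circuit U1 U2 Uk *\<^sub>v v = (?G' * ?C * ?K * ?C) *\<^sub>v (?G *\<^sub>v v)"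
    unfolding circuit_def by (rule assoc_mult_mat_vec[OF GCKC G v])
  also have "\<dots> = (?G' * ?C * ?K) *\<^sub>v (?C *\<^sub>v (?G *\<^sub>v v))"
    by (rule assoc_mult_mat_vec[OF GCK controlled_swap_carrier Gv])
  also have "\<dots> = (?G' * ?C) *\<^sub>v (?K *\<^sub>v (?C *\<^sub>v (?G *\<^sub>v v)))"
    by (rule assoc_mult_mat_vec[OF GC K CGv])
  also have "\<dots> = ?G' *\<^sub>v (?C *\<^sub>v (?K *\<^sub>v (?C *\<^sub>v (?G *\<^sub>v v))))"
    by (rule assoc_mult_mat_vec[OF G' controlled_swap_carrier KCGv])
  finally show ?thesis .
qed

lemma circuit_output:
  assumes U1: "U1 \<in> carrier_mat 4 4" and U2: "U2 \<in> carrier_mat 4 4" and Uk: "Uk \<in> carrier_mat 2 2"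
    and \<psi>: "\<psi> \<in> carrier_vec 2" and \<phi>1: "\<phi>1 \<in> carrier_vec 2" and \<phi>2: "\<phi>2 \<in> carrier_vec 2"
  defines "x \<equiv> kron_vec ket0 (Uk *\<^sub>v \<psi>)" and "y \<equiv> kron_vec \<phi>1 \<phi>2"
    and "W \<equiv> kron (1\<^sub>m 2) (mat_adjoint Uk)"
  shows "circuit U1 U2 Uk *\<^sub>v initial_state \<psi> \<phi>1 \<phi>2 =
    branch_state (W *\<^sub>v (U1 *\<^sub>v x)) (U2 *\<^sub>v y) (W *\<^sub>v (U2 *\<^sub>v x)) (U1 *\<^sub>v y)"
proof -
  have x: "x \<in> carrier_vec 4" and y: "y \<in> carrier_vec 4"
    unfolding x_def y_def
    using kron_vec_carrier_vec[OF ket_carriers(1) mult_mat_vec_carrier[OF Uk \<psi>]]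
      kron_vec_carrier_vec[OF \<phi>1 \<phi>2] by simp_all
  have "initial_state \<psi> \<phi>1 \<phi>2 \<in> carrier_vec 32"
    unfolding initial_state_def using \<psi> \<phi>1 \<phi>2 by (intro carrier_vecI) simp
  then show ?thesis
    using U1 U2 Uk x y
    by (simp add: circuit_mult_vec gate_S_initial_state[OF Uk \<psi> \<phi>1 \<phi>2, folded x_def y_def]
        controlled_swap_branch_state gate_pair_branch_state gate_S_branch_state W_def)
qed

lemma reduced_S_branch_state:
  assumes p: "p \<in> carrier_vec 4" and q: "q \<in> carrier_vec 4" and p': "p' \<in> carrier_vec 4" and q': "q' \<in> carrier_vec 4"
  shows "reduced_S (ketbra (branch_state p q p' q')) =
    (1/2) \<cdot>\<^sub>m ((q \<bullet>c q) \<cdot>\<^sub>m ptr1 2 2 (ketbra p) + (q' \<bullet>c q') \<cdot>\<^sub>m ptr1 2 2 (ketbra p'))"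
proof -
  have trace_E: "ptr1 2 8 (ketbra (kron_vec r s)) = kron (ptr1 2 2 (ketbra r)) (ketbra s)"
    if r: "r \<in> carrier_vec 4" and s: "s \<in> carrier_vec 4" for r s
    using ptr1_kron[of "ketbra r" 2 2 "ketbra s" 4] ketbra_carrier_mat_of[OF r] ketbra_carrier_mat_of[OF s]
    by (simp add: kron_ketbra)
  have trace_f: "ptr2 2 4 (kron (ptr1 2 2 (ketbra r)) (ketbra s)) = (s \<bullet>c s) \<cdot>\<^sub>m ptr1 2 2 (ketbra r)"
    if "s \<in> carrier_vec 4" for r s
    using that by (intro ptr2_kron_ketbra) (simp_all add: ptr1_def)
  have ketbra_16: "ketbra (kron_vec r s) \<in> carrier_mat 16 16"
    if "r \<in> carrier_vec 4" "s \<in> carrier_vec 4" for r s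
    using ketbra_carrier_mat_of kron_vec_carrier_vec[OF that] by simp
  have kron_8: "kron (ptr1 2 2 (ketbra r)) (ketbra s) \<in> carrier_mat 8 8" if "s \<in> carrier_vec 4" for r s
    using kron_carrier_mat[OF ptr1_carrier_mat[of 2 2 "ketbra r"] ketbra_carrier_mat_of[OF that]] by simp
  have pq: "kron_vec p q \<in> carrier_vec 16" "kron_vec p' q' \<in> carrier_vec 16"
    using kron_vec_carrier_vec[OF p q] kron_vec_carrier_vec[OF p' q'] by simp_all
  have branches: "ketbra (kron_vec ket0 (kron_vec p q) + kron_vec ket1 (kron_vec p' q')) \<in> carrier_mat 32 32"
    using kron_vec_3_carrier[OF _ p q, of ket0] kron_vec_3_carrier[OF _ p' q', of ket1]
    by (simp add: ketbra_carrier_mat_of)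
  have "reduced_S (ketbra (branch_state p q p' q')) =
      ptr2 2 4 (ptr1 2 8 ((1/2) \<cdot>\<^sub>m (ketbra (kron_vec p q) + ketbra (kron_vec p' q'))))"
    unfolding reduced_S_def branch_state_def ketbra_smult cmod_inv_sqrt2_sq
      ptr1_ptr1[of 2 8 2, simplified, symmetric]
    using pq branches by (simp add: ptr1_smult ptr1_ketbra_ket0_ket1)
  also have "\<dots> = (1/2) \<cdot>\<^sub>m ((q \<bullet>c q) \<cdot>\<^sub>m ptr1 2 2 (ketbra p) + (q' \<bullet>c q') \<cdot>\<^sub>m ptr1 2 2 (ketbra p'))"
    using p q p' q' ketbra_16 kron_8
    by (simp add: ptr1_smult ptr1_add ptr2_smult ptr2_add trace_E trace_f)
  finally show ?thesis .
qed

lemma reduced_S_circuit_output: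
  assumes U1: "U1 \<in> carrier_mat 4 4" and U2: "U2 \<in> carrier_mat 4 4" and Uk: "Uk \<in> carrier_mat 2 2"
    and \<psi>: "\<psi> \<in> carrier_vec 2" and \<phi>1: "\<phi>1 \<in> carrier_vec 2" and \<phi>2: "\<phi>2 \<in> carrier_vec 2"
  defines "x \<equiv> kron_vec ket0 (Uk *\<^sub>v \<psi>)" and "y \<equiv> kron_vec \<phi>1 \<phi>2"
    and "W \<equiv> kron (1\<^sub>m 2) (mat_adjoint Uk)"
  shows "reduced_S (ketbra (circuit U1 U2 Uk *\<^sub>v initial_state \<psi> \<phi>1 \<phi>2)) =
    (1/2) \<cdot>\<^sub>m ((U2 *\<^sub>v y) \<bullet>c (U2 *\<^sub>v y) \<cdot>\<^sub>m ptr1 2 2 (ketbra (W *\<^sub>v (U1 *\<^sub>v x)))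
      + (U1 *\<^sub>v y) \<bullet>c (U1 *\<^sub>v y) \<cdot>\<^sub>m ptr1 2 2 (ketbra (W *\<^sub>v (U2 *\<^sub>v x))))"
proof -
  have "x \<in> carrier_vec 4" and "y \<in> carrier_vec 4"
    unfolding x_def y_def
    using kron_vec_carrier_vec[OF ket_carriers(1) mult_mat_vec_carrier[OF Uk \<psi>]]
      kron_vec_carrier_vec[OF \<phi>1 \<phi>2] by simp_all
  moreover have "W \<in> carrier_mat 4 4"
    unfolding W_def using kron_carrier_mat[OF one_carrier_mat[of 2] mat_adjoint_carrier[OF Uk]] by simp
  ultimately show ?thesis
    unfolding circuit_output[OF U1 U2 Uk \<psi> \<phi>1 \<phi>2, folded x_def y_def W_def]
    using U1 U2 by (intro reduced_S_branch_state) simp_all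
qed

theorem theorem5:
  fixes U1 U2 Uk :: "complex mat" and \<psi> \<phi>1 \<phi>2 :: "complex vec"
  assumes "unitary_mat 4 U1" and "unitary_mat 4 U2" and "SU2 Uk"
    and "unit_vec2 \<psi>" and "unit_vec2 \<phi>1" and "unit_vec2 \<phi>2"
  shows "reduced_S (ketbra (circuit U1 U2 Uk *\<^sub>v initial_state \<psi> \<phi>1 \<phi>2)) =
    (let \<rho> = ketbra \<psi>;
         T = (\<lambda>X. (1/2 :: complex) \<cdot>\<^sub>m stinespring_channel U1 X + (1/2 :: complex) \<cdot>\<^sub>m stinespring_channel U2 X)
     in mat_adjoint Uk * T (Uk * \<rho> * mat_adjoint Uk) * Uk)"
proof -
  have U1: "U1 \<in> carrier_mat 4 4" and U2: "U2 \<in> carrier_mat 4 4" and Uk: "Uk \<in> carrier_mat 2 2"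
    using assms(1-3) unfolding unitary_mat_def SU2_def by simp_all
  have \<psi>: "\<psi> \<in> carrier_vec 2" and \<phi>1: "\<phi>1 \<in> carrier_vec 2" and \<phi>2: "\<phi>2 \<in> carrier_vec 2"
    using assms(4-6) unfolding unit_vec2_def by simp_all
  let ?T = "\<lambda>U. stinespring_channel U (Uk * ketbra \<psi> * mat_adjoint Uk)"
  have T: "?T U \<in> carrier_mat 2 2" for U
    by (simp add: stinespring_channel_def)
  have "reduced_S (ketbra (circuit U1 U2 Uk *\<^sub>v initial_state \<psi> \<phi>1 \<phi>2)) =
      (1/2) \<cdot>\<^sub>m (mat_adjoint Uk * ?T U1 * Uk + mat_adjoint Uk * ?T U2 * Uk)"
    using reduced_S_circuit_output[OF U1 U2 Uk \<psi> \<phi>1 \<phi>2] U1 U2 Uk \<psi> assms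
    by (simp add: unitary_mult_product_state_cscalar_prod ptr1_branch_eq_conj_stinespring_channel)
  also have "\<dots> = mat_adjoint Uk * ((1/2) \<cdot>\<^sub>m ?T U1 + (1/2) \<cdot>\<^sub>m ?T U2) * Uk"
    by (rule mult_smult_add_mult[OF mat_adjoint_carrier[OF Uk] T T Uk, symmetric])
  finally show ?thesis unfolding Let_def .
qed

end
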